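(* If $(S,K,I)$ is a split graph and $C$ is an induced cycle in the factor graph $\Phi(S)$, then $|C|\neq 5$.
   Context: A split graph $(S,K,I)$ is a graph $S$ together with a fixed partition $V(S)=K\dot\cup I$, where $K$ is a clique and $I$ is an independent set. For a vertex $v$ of $S$, $N_v$ denotes its open neighborhood in $S$ and $d_v=|N_v|$; $\eta_{uv}=|N_u\cap N_v|$. The factor graph $\Phi(S)$ is the loopless multigraph with vertex set $I$ in which, for distinct $u,v\in I$, there is one edge joining $u$ and $v$ for each 2-switch of $S$ acting on $u$ and $v$ (a 2-switch replaces edges $ab,cd$ with $ac,bd$ when $ab,cd\in E(S)$ and $ac,bd\notin E(S)$); equivalently, the multiplicity of $uv$ is $\sigma_{uv}=(d_u-\eta_{uv})(d_v-\eta_{uv})$, and $u,v$ are adjacent iff $\sigma_{uv}>0$. An induced cycle $C=v_1\ldots v_nv_1$ ($n\geq 3$) in $\Phi(S)$ consists of distinct vertices with $v_iv_{i+1}$ and $v_nv_1$ adjacent and no other pair adjacent (multiplicities ignored); $|C|=n$. *)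

theory Defs
  imports Main
begin

definition simple_graph :: "'a set \<Rightarrow> ('a \<Rightarrow> 'a \<Rightarrow> bool) \<Rightarrow> bool" where
  "simple_graph V E \<longleftrightarrow> finite V \<and> (\<forall>x y. E x y \<longrightarrow> x \<in> V \<and> y \<in> V)
     \<and> (\<forall>x y. E x y \<longrightarrow> E y x) \<and> (\<forall>x. \<not> E x x)"

definition split_graph :: "'a set \<Rightarrow> ('a \<Rightarrow> 'a \<Rightarrow> bool) \<Rightarrow> 'a set \<Rightarrow> 'a set \<Rightarrow> bool" where
  "split_graph V E K I \<longleftrightarrow> simple_graph V E \<and> V = K \<union> I \<and> K \<inter> I = {}
     \<and> (\<forall>x\<in>K. \<forall>y\<in>K. x \<noteq> y \<longrightarrow> E x y)
     \<and> (\<forall>x\<in>I. \<forall>y\<in>I. \<not> E x y)"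

definition nbhd :: "'a set \<Rightarrow> ('a \<Rightarrow> 'a \<Rightarrow> bool) \<Rightarrow> 'a \<Rightarrow> 'a set" where
  "nbhd V E v = {w \<in> V. E v w}"

definition deg :: "'a set \<Rightarrow> ('a \<Rightarrow> 'a \<Rightarrow> bool) \<Rightarrow> 'a \<Rightarrow> nat" where
  "deg V E v = card (nbhd V E v)"

definition eta :: "'a set \<Rightarrow> ('a \<Rightarrow> 'a \<Rightarrow> bool) \<Rightarrow> 'a \<Rightarrow> 'a \<Rightarrow> nat" where
  "eta V E u v = card (nbhd V E u \<inter> nbhd V E v)"

text \<open>Multiplicity of the edge uv in the factor graph.\<close>
definition sigma :: "'a set \<Rightarrow> ('a \<Rightarrow> 'a \<Rightarrow> bool) \<Rightarrow> 'a \<Rightarrow> 'a \<Rightarrow> nat" where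
  "sigma V E u v = (deg V E u - eta V E u v) * (deg V E v - eta V E u v)"

text \<open>Adjacency in the factor graph \<Phi>(S) (vertex set I, loopless;
multiplicities ignored).\<close>
definition factor_adj :: "'a set \<Rightarrow> ('a \<Rightarrow> 'a \<Rightarrow> bool) \<Rightarrow> 'a set \<Rightarrow> 'a \<Rightarrow> 'a \<Rightarrow> bool" where
  "factor_adj V E I u v \<longleftrightarrow> u \<in> I \<and> v \<in> I \<and> u \<noteq> v \<and> sigma V E u v > 0"

definition induced_cycle :: "'a set \<Rightarrow> ('a \<Rightarrow> 'a \<Rightarrow> bool) \<Rightarrow> 'a list \<Rightarrow> bool" where
  "induced_cycle W adj cs \<longleftrightarrow> length cs \<ge> 3 \<and> distinct cs \<and> set cs \<subseteq> W
     \<and> (\<forall>i<length cs. \<forall>j<length cs. i \<noteq> j \<longrightarrow>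
          (adj (cs ! i) (cs ! j) \<longleftrightarrow>
             j = Suc i mod length cs \<or> i = Suc j mod length cs))"

end

theory Submission
  imports Defs
begin

text \<open>Since \<open>d\<^sub>u - \<eta>\<^sub>u\<^sub>v = |N\<^sub>u - N\<^sub>v|\<close>, two vertices of \<open>I\<close> are adjacent in \<open>\<Phi>(S)\<close> exactly
when their neighbourhoods are incomparable under inclusion, so \<open>\<Phi>(S)\<close> is an
incomparability graph. An induced 5-cycle in it would make its complement, again a
5-cycle, a comparability graph; but orienting the comparabilities along that odd
cycle, transitivity forces the orientation to alternate, which is impossible.\<close>

lemma pentagon_not_comparability_graph:
  fixes x :: "nat \<Rightarrow> 'b::order"
  assumes "x 0 \<le> x 2 \<or> x 2 \<le> x 0" "x 2 \<le> x 4 \<or> x 4 \<le> x 2" "x 4 \<le> x 1 \<or> x 1 \<le> x 4"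
    "x 1 \<le> x 3 \<or> x 3 \<le> x 1" "x 3 \<le> x 0 \<or> x 0 \<le> x 3"
    and "\<not> (x 0 \<le> x 1 \<or> x 1 \<le> x 0)" "\<not> (x 1 \<le> x 2 \<or> x 2 \<le> x 1)"
    "\<not> (x 2 \<le> x 3 \<or> x 3 \<le> x 2)" "\<not> (x 3 \<le> x 4 \<or> x 4 \<le> x 3)"
    "\<not> (x 4 \<le> x 0 \<or> x 0 \<le> x 4)"
  shows False
  using assms by (metis order_trans)

lemma induced_cycle_cong:
  assumes "\<And>u v. u \<in> W \<Longrightarrow> v \<in> W \<Longrightarrow> u \<noteq> v \<Longrightarrow> adj u v \<longleftrightarrow> adj' u v"
  shows "induced_cycle W adj cs \<longleftrightarrow> induced_cycle W adj' cs"
proof -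
  have "adj (cs ! i) (cs ! j) \<longleftrightarrow> adj' (cs ! i) (cs ! j)"
    if "distinct cs" "set cs \<subseteq> W" "i < length cs" "j < length cs" "i \<noteq> j" for i j
    using that assms nth_mem by (metis nth_eq_iff_index_eq subsetD)
  then show ?thesis
    unfolding induced_cycle_def by auto
qed

lemma induced_cycle_incomparability_length_neq_5:
  fixes f :: "'a \<Rightarrow> 'b::order"
  assumes "induced_cycle W (\<lambda>u v. \<not> (f u \<le> f v \<or> f v \<le> f u)) cs"
  shows "length cs \<noteq> 5"
proof
  assume len: "length cs = 5"
  have incomparable_iff: "\<not> (f (cs ! i) \<le> f (cs ! j) \<or> f (cs ! j) \<le> f (cs ! i))
      \<longleftrightarrow> j = Suc i mod 5 \<or> i = Suc j mod 5"
    if "i < 5" "j < 5" "i \<noteq> j" for i j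
    using assms len that unfolding induced_cycle_def by auto
  show False
    by (rule pentagon_not_comparability_graph[of "\<lambda>i. f (cs ! i)"])
      (use incomparable_iff[of 0 2] incomparable_iff[of 2 4] incomparable_iff[of 4 1]
        incomparable_iff[of 1 3] incomparable_iff[of 3 0] incomparable_iff[of 0 1]
        incomparable_iff[of 1 2] incomparable_iff[of 2 3] incomparable_iff[of 3 4]
        incomparable_iff[of 4 0] in auto)
qed

lemma sigma_pos_iff_nbhd_incomparable:
  assumes "finite V"
  shows "0 < sigma V E u v \<longleftrightarrow>
    \<not> (nbhd V E u \<subseteq> nbhd V E v \<or> nbhd V E v \<subseteq> nbhd V E u)"
proof -
  have finite_nbhd: "finite (nbhd V E w)" for w
    using assms unfolding nbhd_def by simp
  have "deg V E u - eta V E u v = card (nbhd V E u - nbhd V E v)"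
       "deg V E v - eta V E u v = card (nbhd V E v - nbhd V E u)"
    unfolding deg_def eta_def using finite_nbhd
    by (simp_all add: card_Diff_subset_Int Int_commute)
  then show ?thesis
    unfolding sigma_def using finite_nbhd by (auto simp: card_gt_0_iff)
qed

theorem lemma3p2:
  fixes V K I :: "'a set" and E :: "'a \<Rightarrow> 'a \<Rightarrow> bool" and C :: "'a list"
  assumes "split_graph V E K I"
    and "induced_cycle I (factor_adj V E I) C"
  shows "length C \<noteq> 5"
proof -
  have "finite V"
    using assms(1) unfolding split_graph_def simple_graph_def by blast
  then have "induced_cycle I (\<lambda>u v. \<not> (nbhd V E u \<subseteq> nbhd V E v \<or> nbhd V E v \<subseteq> nbhd V E u)) C"
    using assms(2) induced_cycle_cong[of I "factor_adj V E I"]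
    by (simp add: factor_adj_def sigma_pos_iff_nbhd_incomparable)
  then show ?thesis
    by (rule induced_cycle_incomparability_length_neq_5)
qed

end
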